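(* For every non-integer rational number $d>1$, there exist a deterministic discounted-sum automaton $\mathcal{A}$ with discount factor $d$ and a rational number $r$ such that the cut-point language $L^{\ge r}=\{w\in L(\mathcal{A}) : wt_{\mathcal{A}}(w)\ge r\}$ is not $\omega$-regular.
   Context: For a sequence $A$ and discount factor $d>1$, $\mathrm{DS}(A,d)=\sum_{i\ge0}A[i]/d^i$. A discounted-sum automaton is a weighted $\omega$-automaton $(\mathcal{M},\gamma,\mathrm{DS}(\cdot,d))$ where $\mathcal{M}$ is a B\"uchi automaton all of whose states are accepting and $\gamma$ assigns rational weights to transitions; a run's weight is the discounted sum of its weight sequence, and $wt_{\mathcal{A}}(w)$ is the supremum of the weights of runs on $w$. It is deterministic if $\mathcal{M}$ has one initial state and at most one successor per state and letter. *)

theory Defs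
  imports Complex_Main
begin

record ('q, 'a) buchi =
  states :: "'q set"
  alph   :: "'a set"
  init   :: "'q set"
  trans  :: "('q \<times> 'a \<times> 'q) set"
  acc    :: "'q set"

definition buchi_wf :: "('q, 'a) buchi \<Rightarrow> bool" where
  "buchi_wf A \<longleftrightarrow> finite (states A) \<and> finite (alph A) \<and> init A \<subseteq> states A
     \<and> trans A \<subseteq> states A \<times> alph A \<times> states A \<and> acc A \<subseteq> states A"

definition is_run :: "('q, 'a) buchi \<Rightarrow> (nat \<Rightarrow> 'a) \<Rightarrow> (nat \<Rightarrow> 'q) \<Rightarrow> bool" where
  "is_run A w r \<longleftrightarrow> r 0 \<in> init A \<and> (\<forall>i. (r i, w i, r (Suc i)) \<in> trans A)"

definition accepting_run :: "('q, 'a) buchi \<Rightarrow> (nat \<Rightarrow> 'a) \<Rightarrow> (nat \<Rightarrow> 'q) \<Rightarrow> bool" where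
  "accepting_run A w r \<longleftrightarrow> is_run A w r \<and> infinite {i. r i \<in> acc A}"

definition lang :: "('q, 'a) buchi \<Rightarrow> (nat \<Rightarrow> 'a) set" where
  "lang A = {w. (\<forall>i. w i \<in> alph A) \<and> (\<exists>r. accepting_run A w r)}"

text \<open>omega-regular = recognised by some Buchi automaton over the same alphabet
  (state sets taken inside nat, which is no loss of generality for finite state sets).\<close>
definition omega_regular :: "'a set \<Rightarrow> (nat \<Rightarrow> 'a) set \<Rightarrow> bool" where
  "omega_regular \<Sigma> L \<longleftrightarrow> (\<exists>B :: (nat, 'a) buchi. buchi_wf B \<and> alph B = \<Sigma> \<and> lang B = L)"

definition DS :: "(nat \<Rightarrow> real) \<Rightarrow> real \<Rightarrow> real" where
  "DS s d = (\<Sum>i. s i / d ^ i)"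

definition ds_automaton :: "('q, 'a) buchi \<Rightarrow> bool" where
  "ds_automaton M \<longleftrightarrow> buchi_wf M \<and> acc M = states M"

definition run_weight :: "('q \<times> 'a \<times> 'q \<Rightarrow> rat) \<Rightarrow> real \<Rightarrow> (nat \<Rightarrow> 'a) \<Rightarrow> (nat \<Rightarrow> 'q) \<Rightarrow> real" where
  "run_weight \<gamma> d w r = DS (\<lambda>i. real_of_rat (\<gamma> (r i, w i, r (Suc i)))) d"

definition wt :: "('q, 'a) buchi \<Rightarrow> ('q \<times> 'a \<times> 'q \<Rightarrow> rat) \<Rightarrow> real \<Rightarrow> (nat \<Rightarrow> 'a) \<Rightarrow> real" where
  "wt M \<gamma> d w = Sup {run_weight \<gamma> d w r | r. accepting_run M w r}"

definition deterministic :: "('q, 'a) buchi \<Rightarrow> bool" where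
  "deterministic M \<longleftrightarrow> (\<exists>q. init M = {q}) \<and>
     (\<forall>q a q1 q2. (q, a, q1) \<in> trans M \<and> (q, a, q2) \<in> trans M \<longrightarrow> q1 = q2)"

definition cutpoint_lang :: "('q, 'a) buchi \<Rightarrow> ('q \<times> 'a \<times> 'q \<Rightarrow> rat) \<Rightarrow> real \<Rightarrow> real \<Rightarrow> (nat \<Rightarrow> 'a) set" where
  "cutpoint_lang M \<gamma> d r = {w \<in> lang M. wt M \<gamma> d w \<ge> r}"

end

theory Submission
  imports Defs
begin

text \<open>Write \<open>d = p/q\<close> in lowest terms, so \<open>q \<ge> 2\<close>. The one-state automaton reading digits
  \<open>0..p\<close> with weight equal to the digit assigns to a word its value in base \<open>d\<close>. Expanding
  \<open>1/q\<close> greedily in base \<open>d\<close> gives a digit word \<open>x\<close> of value exactly \<open>1/q\<close> whose tails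
  \<open>a\<^sub>n / q\<^sup>n\<^sup>+\<^sup>1\<close> are pairwise distinct, because \<open>q\<close> never divides \<open>a\<^sub>n\<close>. A Buchi automaton
  for \<open>L\<^sup>\<ge>\<^sup>1\<^sup>/\<^sup>q\<close> reaches the same set of states after two different prefixes \<open>x[0,n)\<close> and
  \<open>x[0,m)\<close> of \<open>x\<close>; exchanging these prefixes in front of the tails of \<open>x\<close> keeps the words in
  the language, which forces the \<open>n\<close>-th and \<open>m\<close>-th tails to be equal.\<close>

definition word_splice :: "(nat \<Rightarrow> 'a) \<Rightarrow> nat \<Rightarrow> (nat \<Rightarrow> 'a) \<Rightarrow> nat \<Rightarrow> 'a" where
  "word_splice x n w i = (if i < n then x i else w (i - n))"

lemma word_splice_prefix_suffix [simp]: "word_splice x n (\<lambda>i. x (n + i)) = x"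
  by (simp add: word_splice_def fun_eq_iff)

lemma word_splice_add [simp]: "word_splice x n w (n + k) = w k"
  by (simp add: word_splice_def)

lemma word_splice_map: "(\<lambda>i. f (word_splice x n w i)) = word_splice (\<lambda>i. f (x i)) n (\<lambda>i. f (w i))"
  by (simp add: word_splice_def fun_eq_iff)

lemma infinite_shift_iff: "infinite {i. P (i + k)} \<longleftrightarrow> infinite {i::nat. P i}"
  unfolding frequently_cofinite[symmetric] cofinite_eq_sequentially frequently_def
  using eventually_sequentially_seg[of "\<lambda>i. \<not> P i"] by simp

definition prefix_reach :: "('q, 'a) buchi \<Rightarrow> (nat \<Rightarrow> 'a) \<Rightarrow> nat \<Rightarrow> 'q set" where
  "prefix_reach B x n = {\<rho> n | \<rho>. \<rho> 0 \<in> init B \<and> (\<forall>i<n. (\<rho> i, x i, \<rho> (Suc i)) \<in> trans B)}"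

lemma prefix_reach_subset_states:
  assumes "buchi_wf B"
  shows "prefix_reach B x n \<subseteq> states B"
proof
  fix s assume "s \<in> prefix_reach B x n"
  then obtain \<rho> where \<rho>: "s = \<rho> n" "\<rho> 0 \<in> init B" "\<forall>i<n. (\<rho> i, x i, \<rho> (Suc i)) \<in> trans B"
    unfolding prefix_reach_def by blast
  show "s \<in> states B"
  proof (cases n)
    case 0 then show ?thesis using \<rho> assms by (auto simp: buchi_wf_def)
  next
    case (Suc k)
    then have "(\<rho> k, x k, \<rho> n) \<in> trans B" using \<rho> by auto
    then show ?thesis using \<rho> assms by (auto simp: buchi_wf_def)
  qed
qed

lemma prefix_reach_repeats:
  assumes "buchi_wf B"
  obtains n m where "n \<noteq> m" "prefix_reach B x n = prefix_reach B x m"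
proof -
  have "range (prefix_reach B x) \<subseteq> Pow (states B)"
    using prefix_reach_subset_states[OF assms] by blast
  then have "finite (range (prefix_reach B x))"
    using assms by (auto simp: buchi_wf_def intro: finite_subset)
  then have "\<not> inj (prefix_reach B x)"
    using finite_imageD by blast
  then show ?thesis using that unfolding inj_def by blast
qed

lemma accepting_run_word_splice:
  assumes run: "accepting_run B (word_splice x n w) \<rho>"
    and \<rho>'0: "\<rho>' 0 \<in> init B" and \<rho>'_steps: "\<forall>i<m. (\<rho>' i, x i, \<rho>' (Suc i)) \<in> trans B"
    and meet: "\<rho>' m = \<rho> n"
  shows "accepting_run B (word_splice x m w) (word_splice \<rho>' m (\<lambda>i. \<rho> (n + i)))"
    (is "accepting_run B _ ?\<sigma>")
proof -
  have \<rho>0: "\<rho> 0 \<in> init B" and \<rho>: "\<And>i. (\<rho> i, word_splice x n w i, \<rho> (Suc i)) \<in> trans B"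
    and \<rho>_acc: "infinite {i. \<rho> i \<in> acc B}"
    using run unfolding accepting_run_def is_run_def by auto
  have "?\<sigma> 0 \<in> init B"
    using \<rho>'0 meet \<rho>0 by (cases "m = 0") (auto simp: word_splice_def)
  moreover have "(?\<sigma> i, word_splice x m w i, ?\<sigma> (Suc i)) \<in> trans B" for i
  proof -
    consider "Suc i < m" | "Suc i = m" | "m \<le> i" by linarith
    then show ?thesis
    proof cases
      case 1
      then show ?thesis using \<rho>'_steps by (simp add: word_splice_def)
    next
      case 2
      then have "?\<sigma> i = \<rho>' i" "?\<sigma> (Suc i) = \<rho>' (Suc i)" "word_splice x m w i = x i"
        using meet by (simp_all add: word_splice_def)
      moreover have "(\<rho>' i, x i, \<rho>' (Suc i)) \<in> trans B" using \<rho>'_steps 2 by blast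
      ultimately show ?thesis by simp
    next
      case 3
      then have "?\<sigma> i = \<rho> (n + (i - m))" "?\<sigma> (Suc i) = \<rho> (Suc (n + (i - m)))"
        "word_splice x m w i = w (i - m)"
        by (simp_all add: word_splice_def Suc_diff_le)
      then show ?thesis using \<rho>[of "n + (i - m)"] by (simp only: word_splice_add)
    qed
  qed
  moreover have "infinite {i. ?\<sigma> i \<in> acc B}"
  proof -
    have "{i. ?\<sigma> (i + m) \<in> acc B} = {i. \<rho> (i + n) \<in> acc B}"
      by (simp add: word_splice_def add.commute)
    then have "infinite {i. ?\<sigma> (i + m) \<in> acc B}"
      using \<rho>_acc infinite_shift_iff[of "\<lambda>j. \<rho> j \<in> acc B" n] by simp
    then show ?thesis
      using infinite_shift_iff[of "\<lambda>j. ?\<sigma> j \<in> acc B" m] by simp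
  qed
  ultimately show ?thesis unfolding accepting_run_def is_run_def by blast
qed

lemma word_splice_in_lang_if_prefix_reach_eq:
  assumes eq: "prefix_reach B x n = prefix_reach B x m"
    and L: "word_splice x n w \<in> lang B" and x: "\<And>i. x i \<in> alph B"
  shows "word_splice x m w \<in> lang B"
proof -
  from L obtain \<rho> where run: "accepting_run B (word_splice x n w) \<rho>"
    and w: "\<forall>i. word_splice x n w i \<in> alph B"
    unfolding lang_def by blast
  have "(\<rho> i, x i, \<rho> (Suc i)) \<in> trans B" if "i < n" for i
    using run that unfolding accepting_run_def is_run_def by (metis word_splice_def)
  then have "\<rho> n \<in> prefix_reach B x n"
    using run unfolding prefix_reach_def accepting_run_def is_run_def by blast
  then obtain \<rho>' where "\<rho>' m = \<rho> n" "\<rho>' 0 \<in> init B" "\<forall>i<m. (\<rho>' i, x i, \<rho>' (Suc i)) \<in> trans B"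
    using eq unfolding prefix_reach_def by auto
  then have "accepting_run B (word_splice x m w) (word_splice \<rho>' m (\<lambda>i. \<rho> (n + i)))"
    using accepting_run_word_splice[OF run] by blast
  moreover have "word_splice x m w i \<in> alph B" for i
  proof -
    have "w k \<in> alph B" for k
      using w[rule_format, of "n + k"] by (simp only: word_splice_add)
    then show ?thesis using x by (simp add: word_splice_def)
  qed
  ultimately show ?thesis unfolding lang_def by blast
qed

subsection \<open>Discounted sums\<close>

lemma summable_discounted:
  fixes D :: real
  assumes "D > 1" "\<And>i. \<bar>s i\<bar> \<le> C"
  shows "summable (\<lambda>i. s i / D ^ i)"
proof (rule summable_comparison_test)
  show "summable (\<lambda>i. C * (1 / D) ^ i)"
    using assms by (intro summable_mult summable_geometric) simp
  show "\<exists>N. \<forall>n\<ge>N. norm (s n / D ^ n) \<le> C * (1 / D) ^ n"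
    using assms by (auto simp: power_one_over abs_divide divide_right_mono)
qed

lemma DS_word_splice:
  fixes D :: real
  assumes "D > 1" "\<And>i. \<bar>w i\<bar> \<le> C"
  shows "DS (word_splice x m w) D = (\<Sum>i<m. x i / D ^ i) + DS w D / D ^ m"
proof -
  have "(\<lambda>i. w i / D ^ i / D ^ m) sums (DS w D / D ^ m)"
    using summable_discounted[OF assms] unfolding DS_def by (intro sums_divide summable_sums)
  moreover have "(\<lambda>i. word_splice x m w (i + m) / D ^ (i + m)) = (\<lambda>i. w i / D ^ i / D ^ m)"
    by (simp add: word_splice_def power_add)
  ultimately have "(\<lambda>i. word_splice x m w (i + m) / D ^ (i + m)) sums (DS w D / D ^ m)"
    by simp
  then have "(\<lambda>i. word_splice x m w i / D ^ i) sums (DS w D / D ^ m + (\<Sum>i<m. word_splice x m w i / D ^ i))"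
    by (rule sums_iff_shift[where f="\<lambda>i. word_splice x m w i / D ^ i" and n=m, THEN iffD1])
  then show ?thesis
    by (simp add: DS_def sums_iff word_splice_def add.commute)
qed

lemma DS_shift_eq_recurrence_solution:
  fixes D :: real and x t :: "nat \<Rightarrow> real"
  assumes D: "D > 1" and rec: "\<And>j. t j = x j + t (Suc j) / D" and bound: "\<And>j. \<bar>t j\<bar> \<le> C"
  shows "DS (\<lambda>i. x (n + i)) D = t n"
proof -
  have partial: "(\<Sum>i<k. x (n + i) / D ^ i) = t n - t (n + k) / D ^ k" for k
  proof (induction k)
    case (Suc k)
    have "t (n + k) / D ^ k = x (n + k) / D ^ k + t (Suc (n + k)) / D ^ Suc k"
      by (subst rec) (simp add: add_divide_distrib)
    then show ?case using Suc by simp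
  qed simp
  have "Bfun (\<lambda>k. t (n + k)) sequentially"
    using bound by (intro BfunI) (auto intro: always_eventually)
  moreover have "Zfun (\<lambda>k. (1 / D) ^ k) sequentially"
    using LIMSEQ_power_zero[of "1 / D"] D by (simp add: tendsto_Zfun_iff)
  ultimately have "Zfun (\<lambda>k. t (n + k) * (1 / D) ^ k) sequentially"
    by (rule bounded_bilinear.Bfun_prod_Zfun[OF bounded_bilinear_mult])
  then have "(\<lambda>k. t n - t (n + k) / D ^ k) \<longlonglongrightarrow> t n - 0"
    by (intro tendsto_diff tendsto_const) (simp add: tendsto_Zfun_iff power_one_over)
  then have "(\<lambda>i. x (n + i) / D ^ i) sums t n"
    unfolding sums_def partial by simp
  then show ?thesis
    unfolding DS_def by (rule sums_unique[symmetric])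
qed

subsection \<open>Non-regular cut-point languages\<close>

lemma tail_le_if_prefix_reach_eq:
  fixes D :: real and x :: "nat \<Rightarrow> nat"
  assumes D: "D > 1" and x: "\<And>i. x i \<le> N"
    and L: "lang B = {w. (\<forall>i. w i \<le> N) \<and> DS (\<lambda>i. real (x i)) D \<le> DS (\<lambda>i. real (w i)) D}"
    and alph: "alph B = {0..N}"
    and eq: "prefix_reach B x n = prefix_reach B x m"
  shows "DS (\<lambda>i. real (x (m + i))) D \<le> DS (\<lambda>i. real (x (n + i))) D"
proof -
  define tail where "tail k = (\<lambda>i. x (k + i))" for k
  have tail_bound: "\<bar>real (tail k i)\<bar> \<le> real N" for k i
    using x by (simp add: tail_def)
  have DS_splice_tail: "DS (\<lambda>i. real (word_splice x k (tail l) i)) D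
      = (\<Sum>i<k. real (x i) / D ^ i) + DS (\<lambda>i. real (tail l i)) D / D ^ k" for k l
    unfolding word_splice_map by (rule DS_word_splice[OF D tail_bound])
  have "word_splice x n (tail n) \<in> lang B"
    using L x by (simp add: tail_def)
  then have "word_splice x m (tail n) \<in> lang B"
    using alph x by (intro word_splice_in_lang_if_prefix_reach_eq[OF eq]) auto
  then have "DS (\<lambda>i. real (word_splice x m (tail m) i)) D \<le> DS (\<lambda>i. real (word_splice x m (tail n) i)) D"
    using L by (simp add: tail_def)
  then have "DS (\<lambda>i. real (tail m i)) D / D ^ m \<le> DS (\<lambda>i. real (tail n i)) D / D ^ m"
    unfolding DS_splice_tail by simp
  then show ?thesis
    using D by (simp add: divide_le_cancel tail_def)
qed

lemma not_omega_regular_cutpoint: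
  fixes D :: real and x :: "nat \<Rightarrow> nat"
  assumes "D > 1" "\<And>i. x i \<le> N" and tails_inj: "inj (\<lambda>n. DS (\<lambda>i. real (x (n + i))) D)"
  shows "\<not> omega_regular {0..N} {w. (\<forall>i. w i \<le> N) \<and> DS (\<lambda>i. real (x i)) D \<le> DS (\<lambda>i. real (w i)) D}"
proof
  assume "omega_regular {0..N} {w. (\<forall>i. w i \<le> N) \<and> DS (\<lambda>i. real (x i)) D \<le> DS (\<lambda>i. real (w i)) D}"
  then obtain B :: "(nat, nat) buchi" where B: "buchi_wf B" "alph B = {0..N}"
    "lang B = {w. (\<forall>i. w i \<le> N) \<and> DS (\<lambda>i. real (x i)) D \<le> DS (\<lambda>i. real (w i)) D}"
    unfolding omega_regular_def by blast
  obtain n m where "n \<noteq> m" and eq: "prefix_reach B x n = prefix_reach B x m"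
    using prefix_reach_repeats[OF B(1)] by metis
  have "DS (\<lambda>i. real (x (m + i))) D = DS (\<lambda>i. real (x (n + i))) D"
    using tail_le_if_prefix_reach_eq[OF assms(1,2) B(3,2)] eq by (metis order_antisym)
  with \<open>n \<noteq> m\<close> tails_inj show False by (auto dest: injD)
qed

subsection \<open>Greedy expansion of \<open>1/q\<close> in base \<open>p/q\<close>\<close>

text \<open>The remainder after \<open>n\<close> greedy digits is \<open>t\<^sub>n = a\<^sub>n / q\<^sup>n\<^sup>+\<^sup>1\<close> with \<open>a\<^sub>n = greedy_num p q n\<close>;
  the digit is \<open>\<lfloor>t\<^sub>n\<rfloor>\<close> and \<open>t\<^sub>n\<^sub>+\<^sub>1 = (p/q) (t\<^sub>n - \<lfloor>t\<^sub>n\<rfloor>) = p (a\<^sub>n mod q\<^sup>n\<^sup>+\<^sup>1) / q\<^sup>n\<^sup>+\<^sup>2\<close>.\<close>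

fun greedy_num :: "int \<Rightarrow> int \<Rightarrow> nat \<Rightarrow> int" where
  "greedy_num p q 0 = 1"
| "greedy_num p q (Suc n) = p * (greedy_num p q n mod q ^ Suc n)"

definition greedy_digit :: "int \<Rightarrow> int \<Rightarrow> nat \<Rightarrow> nat" where
  "greedy_digit p q n = nat (greedy_num p q n div q ^ Suc n)"

definition greedy_rem :: "int \<Rightarrow> int \<Rightarrow> nat \<Rightarrow> real" where
  "greedy_rem p q n = of_int (greedy_num p q n) / of_int q ^ Suc n"

lemma greedy_num_nonneg: "p > 0 \<Longrightarrow> q > 0 \<Longrightarrow> greedy_num p q n \<ge> 0"
  by (cases n) auto

lemma greedy_num_le: "p > 0 \<Longrightarrow> q > 0 \<Longrightarrow> greedy_num p q n \<le> p * q ^ n"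
  by (cases n) (auto simp: less_imp_le)

lemma greedy_num_not_dvd:
  assumes "q \<ge> 2" "coprime p q"
  shows "\<not> q dvd greedy_num p q n"
proof (induction n)
  case 0
  then show ?case using assms(1) zdvd_imp_le[of q 1] by auto
next
  case (Suc n)
  have "greedy_num p q n mod q ^ Suc n mod q = greedy_num p q n mod q"
    by (rule mod_mod_cancel) simp
  with Suc have "\<not> q dvd greedy_num p q n mod q ^ Suc n"
    by (simp add: dvd_eq_mod_eq_0)
  with assms(2) show ?case
    by (simp add: coprime_commute coprime_dvd_mult_right_iff)
qed

lemma greedy_digit_le:
  assumes "p > 0" "q > 0"
  shows "greedy_digit p q n \<le> nat p"
proof -
  have "greedy_num p q n div q ^ Suc n \<le> p * q ^ n div q ^ Suc n"
    using assms greedy_num_le[OF assms] by (intro zdiv_mono1) simp_all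
  also have "\<dots> = p div q"
    using assms by simp
  also have "\<dots> \<le> p"
    using assms by (simp add: int_div_le_self)
  finally show ?thesis by (simp add: greedy_digit_def)
qed

lemma greedy_rem_bounds:
  assumes "p > 0" "q > 0"
  shows "0 \<le> greedy_rem p q n" "greedy_rem p q n \<le> of_int p"
proof -
  have "p * q ^ n \<le> p * q ^ Suc n"
    using assms by (intro mult_left_mono power_increasing) simp_all
  then have "greedy_num p q n \<le> p * q ^ Suc n"
    using greedy_num_le[OF assms, of n] by linarith
  then have "(of_int (greedy_num p q n) :: real) \<le> of_int p * of_int q ^ Suc n"
    by (metis of_int_le_iff of_int_mult of_int_power)
  then show "0 \<le> greedy_rem p q n" "greedy_rem p q n \<le> of_int p"
    using assms greedy_num_nonneg[OF assms] by (simp_all add: greedy_rem_def divide_le_eq)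
qed

lemma greedy_rem_recurrence:
  assumes "p > 0" "q > 0"
  shows "greedy_rem p q n = real (greedy_digit p q n) + greedy_rem p q (Suc n) / (of_int p / of_int q)"
proof -
  define Q where "Q = q ^ Suc n"
  define a where "a = greedy_num p q n"
  have Q: "Q > 0" using assms by (simp add: Q_def)
  have "a div Q \<ge> 0"
    using greedy_num_nonneg[OF assms] Q by (simp add: a_def pos_imp_zdiv_nonneg_iff)
  then have digit: "real (greedy_digit p q n) = of_int (a div Q)"
    by (simp add: greedy_digit_def a_def Q_def)
  have next_rem: "greedy_rem p q (Suc n) / (of_int p / of_int q) = of_int (a mod Q) / of_int Q"
    using assms by (simp add: greedy_rem_def a_def Q_def field_simps)
  have "(of_int a :: real) = of_int (a div Q) * of_int Q + of_int (a mod Q)"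
    by (metis div_mult_mod_eq of_int_add of_int_mult)
  then have "(of_int a / of_int Q :: real) = of_int (a div Q) + of_int (a mod Q) / of_int Q"
    using Q by (simp add: field_simps)
  moreover have "greedy_rem p q n = of_int a / of_int Q"
    by (simp add: greedy_rem_def a_def Q_def)
  ultimately show ?thesis
    by (simp only: digit next_rem)
qed

text \<open>Distinct remainders: \<open>t\<^sub>n = t\<^sub>m\<close> with \<open>n < m\<close> would give \<open>a\<^sub>m = a\<^sub>n q\<^sup>m\<^sup>-\<^sup>n\<close>.\<close>

lemma inj_greedy_rem:
  assumes "q \<ge> 2" "coprime p q"
  shows "inj (greedy_rem p q)"
proof (intro linorder_injI notI)
  fix n m :: nat
  assume "n < m" "greedy_rem p q n = greedy_rem p q m"
  then have "(of_int (greedy_num p q n * q ^ (m - n) * q ^ Suc n) :: real)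
      = of_int (greedy_num p q m * q ^ Suc n)"
    using assms by (simp add: greedy_rem_def field_simps flip: power_add)
  then have "greedy_num p q m = greedy_num p q n * q ^ (m - n)"
    using assms(1) by (simp only: of_int_eq_iff) simp
  moreover have "q dvd q ^ (m - n)" using \<open>n < m\<close> by simp
  ultimately show False
    using greedy_num_not_dvd[OF assms, of m] by simp
qed

lemma DS_greedy_digit:
  assumes "0 < q" "q < p"
  shows "DS (\<lambda>i. real (greedy_digit p q (n + i))) (of_int p / of_int q) = greedy_rem p q n"
proof -
  have "p > 0" using assms by simp
  then show ?thesis
    using assms greedy_rem_bounds[of p q]
    by (intro DS_shift_eq_recurrence_solution[where C="of_int p"] greedy_rem_recurrence) auto
qed

definition digit_automaton :: "nat \<Rightarrow> (nat, nat) buchi" where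
  "digit_automaton N =
     \<lparr>states = {0}, alph = {0..N}, init = {0}, trans = {(0, a, 0) | a. a \<le> N}, acc = {0}\<rparr>"

definition digit_weight :: "nat \<times> nat \<times> nat \<Rightarrow> rat" where
  "digit_weight = (\<lambda>(_, a, _). of_nat a)"

lemma ds_automaton_digit_automaton: "ds_automaton (digit_automaton N)"
  by (auto simp: digit_automaton_def ds_automaton_def buchi_wf_def)

lemma deterministic_digit_automaton: "deterministic (digit_automaton N)"
  by (simp add: digit_automaton_def deterministic_def)

lemma accepting_run_digit_automaton_iff:
  "accepting_run (digit_automaton N) w \<rho> \<longleftrightarrow> (\<forall>i. w i \<le> N) \<and> \<rho> = (\<lambda>_. 0)"
proof
  assume "accepting_run (digit_automaton N) w \<rho>"
  then have "\<rho> 0 = 0" and step: "\<rho> (Suc i) = 0 \<and> w i \<le> N" for i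
    by (auto simp: accepting_run_def is_run_def digit_automaton_def)
  then have "\<rho> i = 0" for i
    by (cases i) simp_all
  with step show "(\<forall>i. w i \<le> N) \<and> \<rho> = (\<lambda>_. 0)"
    by auto
qed (auto simp: accepting_run_def is_run_def digit_automaton_def)

lemma cutpoint_lang_digit_automaton:
  "cutpoint_lang (digit_automaton N) digit_weight D c = {w. (\<forall>i. w i \<le> N) \<and> c \<le> DS (\<lambda>i. real (w i)) D}"
proof -
  have "wt (digit_automaton N) digit_weight D w = DS (\<lambda>i. real (w i)) D" if "\<forall>i. w i \<le> N" for w
  proof -
    have "{run_weight digit_weight D w \<rho> | \<rho>. accepting_run (digit_automaton N) w \<rho>}
        = {DS (\<lambda>i. real (w i)) D}"
      using that by (auto simp: accepting_run_digit_automaton_iff run_weight_def digit_weight_def)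
    then show ?thesis by (simp add: wt_def)
  qed
  moreover have "lang (digit_automaton N) = {w. \<forall>i. w i \<le> N}"
    unfolding lang_def accepting_run_digit_automaton_iff by (simp add: digit_automaton_def)
  ultimately show ?thesis by (auto simp: cutpoint_lang_def)
qed

lemma quotient_of_noninteger_gt_one:
  assumes "d > 1" "d \<notin> \<int>" "quotient_of d = (p, q)"
  shows "2 \<le> q" "q < p" "coprime p q" "real_of_rat d = of_int p / of_int q"
proof -
  have q: "q > 0" and d: "d = of_int p / of_int q"
    using assms(3) quotient_of_denom_pos quotient_of_div by blast+
  show "coprime p q" using assms(3) quotient_of_coprime by blast
  show "real_of_rat d = of_int p / of_int q" by (simp add: d of_rat_divide)
  have "q \<noteq> 1" using assms(2) d Ints_of_int by force
  then show "2 \<le> q" using q by simp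
  show "q < p" using assms(1) q by (simp add: d less_divide_eq)
qed

theorem theorem6:
  fixes d :: rat
  assumes "d > 1" and "d \<notin> \<int>"
  shows "\<exists>(M :: (nat, nat) buchi) (\<gamma> :: nat \<times> nat \<times> nat \<Rightarrow> rat) (r :: rat).
           ds_automaton M \<and> deterministic M \<and>
           \<not> omega_regular (alph M) (cutpoint_lang M \<gamma> (real_of_rat d) (real_of_rat r))"
proof -
  obtain p q where "quotient_of d = (p, q)" by fastforce
  note pq = quotient_of_noninteger_gt_one[OF assms this]
  have p: "p > 0" and q: "q > 0" using pq(1,2) by simp_all
  define x where "x = greedy_digit p q"
  have x_value: "DS (\<lambda>i. real (x i)) (real_of_rat d) = real_of_rat (1 / of_int q)"
    using DS_greedy_digit[OF q pq(2), of 0] by (simp add: x_def pq(4) greedy_rem_def of_rat_divide)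
  have "\<not> omega_regular {0..nat p}
      {w. (\<forall>i. w i \<le> nat p) \<and> DS (\<lambda>i. real (x i)) (real_of_rat d) \<le> DS (\<lambda>i. real (w i)) (real_of_rat d)}"
  proof (rule not_omega_regular_cutpoint)
    show "real_of_rat d > 1" using assms(1) by simp
    show "x i \<le> nat p" for i using greedy_digit_le[OF p q] by (simp add: x_def)
    show "inj (\<lambda>n. DS (\<lambda>i. real (x (n + i))) (real_of_rat d))"
      using inj_greedy_rem[OF pq(1,3)] by (simp add: x_def pq(4) DS_greedy_digit[OF q pq(2)])
  qed
  then have "\<not> omega_regular (alph (digit_automaton (nat p)))
      (cutpoint_lang (digit_automaton (nat p)) digit_weight (real_of_rat d) (real_of_rat (1 / of_int q)))"
    unfolding cutpoint_lang_digit_automaton x_value by (simp add: digit_automaton_def)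
  with ds_automaton_digit_automaton deterministic_digit_automaton show ?thesis
    by blast
qed

end
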